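(* Let $(A,\mathcal H)$ be a left Hopf algebroid such that ${}_s\mathcal H$ is $A$-flat. Let $B$ be a right $\mathcal H$-comodule $A^o$-subring of $\mathcal H$ via $t$ such that the inclusion $B\to\mathcal H$ is a pure morphism of right $B$-modules and $\gamma(B)\subseteq B\otimes_{A^o}\mathcal H$. Then $B=\mathcal H^{\mathrm{co}\,\mathcal H/\mathcal HB^+}$.
   Context: $\Bbbk$ is a field. A left bialgebroid $(A,\mathcal H)$: $\Bbbk$-algebras $A,\mathcal H$, algebra maps $s:A\to\mathcal H$, $t:A^o\to\mathcal H$ with commuting images, $A$-bilinear $\Delta:\mathcal H\to\mathcal H\otimes_A\mathcal H$, $\varepsilon:\mathcal H\to A$ (bimodule structure $a\cdot h\cdot b=s(a)t(b)h$; $\mathcal H\otimes_A\mathcal H$ = quotient of $\mathcal H\otimes\mathcal H$ by span of $t(a)x\otimes y-x\otimes s(a)y$), with $(\mathcal H,\Delta,\varepsilon)$ a coassociative counital $A$-coring, $\Delta$ an algebra map into the Takeuchi product $\{\sum x_i\otimes_Ay_i:\sum x_it(a)\otimes_Ay_i=\sum x_i\otimes_Ay_is(a)\ \forall a\}$, $\varepsilon(xs(\varepsilon(y)))=\varepsilon(xy)=\varepsilon(xt(\varepsilon(y)))$, $\varepsilon(1)=1$; $\Delta(x)=\sum x_1\otimes_Ax_2$, $\mathcal H^+=\ker\varepsilon$, $B^+=B\cap\mathcal H^+$. It is a left Hopf algebroid if $\beta:\mathcal H\otimes_{A^o}\mathcal H\to\mathcal H\otimes_A\mathcal H$, $x\otimes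 y\mapsto\sum x_1\otimes_Ax_2y$ is bijective ($\mathcal H\otimes_{A^o}\mathcal H$ = quotient by span of $xt(a)\otimes y-x\otimes t(a)y$); $\gamma(x)=\beta^{-1}(x\otimes_A1)$, and "$\gamma(B)\subseteq B\otimes_{A^o}\mathcal H$" means $\gamma(B)$ lies in the image of $B\otimes_{A^o}\mathcal H\to\mathcal H\otimes_{A^o}\mathcal H$. "${}_s\mathcal H$ is $A$-flat": flat as left $A$-module via $s$. A right $\mathcal H$-comodule $A^o$-subring via $t$: a subalgebra $B\supseteq t(A)$ with coassociative counital right $A$-linear coaction $\delta:B\to B\otimes_A\mathcal H$ ($b\cdot a=t(a)b$; $\mathcal H$ left via $s$) with $(\iota\otimes_A\mathcal H)\delta=\Delta\iota$. For a left ideal $I$ with $\varepsilon(I)=0$ and $\Delta(I)\subseteq$ image of $I\otimes_A\mathcal H+\mathcal H\otimes_AI$ (e.g. $I=\mathcal HB^+$), with projection $\pi$: $\mathcal H^{\mathrm{co}\,\mathcal H/I}=\{x:\sum\pi(x_1)\otimes_Ax_2=\pi(1)\otimes_Ax\}$. *)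

theory Defs
  imports Main "HOL-Library.Poly_Mapping"
begin

text \<open>Elements of a tensor product M (x)_R N are represented by formal integer
combinations of pairs, i.e. elements of the free abelian group (M x N =>0 int),
modulo the subgroup of tensor relations defined below.\<close>

definition lift :: "('x \<Rightarrow> ('y \<Rightarrow>\<^sub>0 int)) \<Rightarrow> ('x \<Rightarrow>\<^sub>0 int) \<Rightarrow> ('y \<Rightarrow>\<^sub>0 int)" where
  "lift F X = (\<Sum>p\<in>Poly_Mapping.keys X. \<Sum>q\<in>Poly_Mapping.keys (F p). Poly_Mapping.single q (Poly_Mapping.lookup X p * Poly_Mapping.lookup (F p) q))"

definition tmap :: "('m \<Rightarrow> 'm2) \<Rightarrow> ('n \<Rightarrow> 'n2) \<Rightarrow> ('m \<times> 'n \<Rightarrow>\<^sub>0 int) \<Rightarrow> ('m2 \<times> 'n2 \<Rightarrow>\<^sub>0 int)" where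
  "tmap f g X = lift (\<lambda>(x, y). Poly_Mapping.single (f x, g y) 1) X"

definition ev :: "('x \<Rightarrow> 'r::ring_1) \<Rightarrow> ('x \<Rightarrow>\<^sub>0 int) \<Rightarrow> 'r" where
  "ev F X = (\<Sum>p\<in>Poly_Mapping.keys X. of_int (Poly_Mapping.lookup X p) * F p)"

text \<open>The subgroup of tensor relations for M (x)_R N, where M is a right R-module
(carrier M, addition pM, action aM) and N a left R-module (carrier N, addition pN,
action aN), R a subset of a ring.\<close>
inductive_set tens_rel ::
  "('m \<Rightarrow> 'm \<Rightarrow> 'm) \<Rightarrow> ('n \<Rightarrow> 'n \<Rightarrow> 'n) \<Rightarrow> ('m \<Rightarrow> 'r \<Rightarrow> 'm) \<Rightarrow> ('r \<Rightarrow> 'n \<Rightarrow> 'n)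
   \<Rightarrow> 'm set \<Rightarrow> 'n set \<Rightarrow> 'r set \<Rightarrow> ('m \<times> 'n \<Rightarrow>\<^sub>0 int) set"
  for pM pN aM aN M N R where
  tr_zero: "0 \<in> tens_rel pM pN aM aN M N R"
| tr_add: "x \<in> tens_rel pM pN aM aN M N R \<Longrightarrow> y \<in> tens_rel pM pN aM aN M N R
           \<Longrightarrow> x + y \<in> tens_rel pM pN aM aN M N R"
| tr_neg: "x \<in> tens_rel pM pN aM aN M N R \<Longrightarrow> - x \<in> tens_rel pM pN aM aN M N R"
| tr_addl: "m \<in> M \<Longrightarrow> m' \<in> M \<Longrightarrow> n \<in> N \<Longrightarrow>
     Poly_Mapping.single (pM m m', n) 1 - Poly_Mapping.single (m, n) 1 - Poly_Mapping.single (m', n) 1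
       \<in> tens_rel pM pN aM aN M N R"
| tr_addr: "m \<in> M \<Longrightarrow> n \<in> N \<Longrightarrow> n' \<in> N \<Longrightarrow>
     Poly_Mapping.single (m, pN n n') 1 - Poly_Mapping.single (m, n) 1 - Poly_Mapping.single (m, n') 1
       \<in> tens_rel pM pN aM aN M N R"
| tr_bal: "m \<in> M \<Longrightarrow> r \<in> R \<Longrightarrow> n \<in> N \<Longrightarrow>
     Poly_Mapping.single (aM m r, n) 1 - Poly_Mapping.single (m, aN r n) 1 \<in> tens_rel pM pN aM aN M N R"

text \<open>H (x)_A H for a bialgebroid: H right A-module via x.a = t(a) x,
left A-module via a.y = s(a) y. The first factor may be restricted to a subset M1
(e.g. B (x)_A H).\<close>
definition tensA :: "('a \<Rightarrow> 'h::ring_1) \<Rightarrow> ('a \<Rightarrow> 'h) \<Rightarrow> 'h set \<Rightarrow> ('h \<times> 'h \<Rightarrow>\<^sub>0 int) set" where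
  "tensA s t M1 = tens_rel (+) (+) (\<lambda>x a. t a * x) (\<lambda>a y. s a * y) M1 UNIV UNIV"

definition tensAo :: "('a \<Rightarrow> 'h::ring_1) \<Rightarrow> ('h \<times> 'h \<Rightarrow>\<^sub>0 int) set" where
  "tensAo t = tens_rel (+) (+) (\<lambda>x a. x * t a) (\<lambda>a y. t a * y) UNIV UNIV UNIV"

text \<open>Threefold tensor M1 (x)_A H (x)_A H (M1 a subset of H closed under t(A) left multiplication).\<close>
inductive_set tens3_rel :: "('a \<Rightarrow> 'h::ring_1) \<Rightarrow> ('a \<Rightarrow> 'h) \<Rightarrow> 'h set \<Rightarrow> ('h \<times> 'h \<times> 'h \<Rightarrow>\<^sub>0 int) set"
  for s t M1 where
  t3_zero: "0 \<in> tens3_rel s t M1"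
| t3_add: "x \<in> tens3_rel s t M1 \<Longrightarrow> y \<in> tens3_rel s t M1 \<Longrightarrow> x + y \<in> tens3_rel s t M1"
| t3_neg: "x \<in> tens3_rel s t M1 \<Longrightarrow> - x \<in> tens3_rel s t M1"
| t3_add1: "x \<in> M1 \<Longrightarrow> x' \<in> M1 \<Longrightarrow>
    Poly_Mapping.single (x + x', y, z) 1 - Poly_Mapping.single (x, y, z) 1 - Poly_Mapping.single (x', y, z) 1
      \<in> tens3_rel s t M1"
| t3_add2: "x \<in> M1 \<Longrightarrow>
    Poly_Mapping.single (x, y + y', z) 1 - Poly_Mapping.single (x, y, z) 1 - Poly_Mapping.single (x, y', z) 1
      \<in> tens3_rel s t M1"
| t3_add3: "x \<in> M1 \<Longrightarrow>
    Poly_Mapping.single (x, y, z + z') 1 - Poly_Mapping.single (x, y, z) 1 - Poly_Mapping.single (x, y, z') 1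
      \<in> tens3_rel s t M1"
| t3_bal1: "x \<in> M1 \<Longrightarrow>
    Poly_Mapping.single (t a * x, y, z) 1 - Poly_Mapping.single (x, s a * y, z) 1 \<in> tens3_rel s t M1"
| t3_bal2: "x \<in> M1 \<Longrightarrow>
    Poly_Mapping.single (x, t a * y, z) 1 - Poly_Mapping.single (x, y, s a * z) 1 \<in> tens3_rel s t M1"

definition comul_left :: "('h \<Rightarrow> ('h \<times> 'h \<Rightarrow>\<^sub>0 int)) \<Rightarrow> ('h \<times> 'h \<Rightarrow>\<^sub>0 int) \<Rightarrow> ('h \<times> 'h \<times> 'h \<Rightarrow>\<^sub>0 int)" where
  "comul_left D1 X = lift (\<lambda>(x, y). lift (\<lambda>(u, v). Poly_Mapping.single (u, v, y) 1) (D1 x)) X"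

definition comul_right :: "('h \<Rightarrow> ('h \<times> 'h \<Rightarrow>\<^sub>0 int)) \<Rightarrow> ('h \<times> 'h \<Rightarrow>\<^sub>0 int) \<Rightarrow> ('h \<times> 'h \<times> 'h \<Rightarrow>\<^sub>0 int)" where
  "comul_right D X = lift (\<lambda>(x, y). lift (\<lambda>(u, v). Poly_Mapping.single (x, u, v) 1) (D y)) X"

definition tmult :: "('h::ring_1 \<times> 'h \<Rightarrow>\<^sub>0 int) \<Rightarrow> ('h \<times> 'h \<Rightarrow>\<^sub>0 int) \<Rightarrow> ('h \<times> 'h \<Rightarrow>\<^sub>0 int)" where
  "tmult X Y = lift (\<lambda>(x1, x2). lift (\<lambda>(y1, y2). Poly_Mapping.single (x1 * y1, x2 * y2) 1) Y) X"

definition left_bialgebroid ::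
  "('k::field \<Rightarrow> 'a::ring_1) \<Rightarrow> ('k \<Rightarrow> 'h::ring_1) \<Rightarrow> ('a \<Rightarrow> 'h) \<Rightarrow> ('a \<Rightarrow> 'h)
   \<Rightarrow> ('h \<Rightarrow> ('h \<times> 'h \<Rightarrow>\<^sub>0 int)) \<Rightarrow> ('h \<Rightarrow> 'a) \<Rightarrow> bool" where
  "left_bialgebroid \<iota> \<kappa> s t \<Delta> \<epsilon> \<longleftrightarrow>
    \<comment> \<open>A and H are k-algebras (structure maps iota, kappa central ring homs)\<close>
    \<iota> 1 = 1 \<and> (\<forall>c d. \<iota> (c + d) = \<iota> c + \<iota> d \<and> \<iota> (c * d) = \<iota> c * \<iota> d)
    \<and> (\<forall>c a. \<iota> c * a = a * \<iota> c)
    \<and> \<kappa> 1 = 1 \<and> (\<forall>c d. \<kappa> (c + d) = \<kappa> c + \<kappa> d \<and> \<kappa> (c * d) = \<kappa> c * \<kappa> d)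
    \<and> (\<forall>c h. \<kappa> c * h = h * \<kappa> c)
    \<comment> \<open>s : A -> H and t : A^o -> H are k-algebra maps with commuting images\<close>
    \<and> s 1 = 1 \<and> (\<forall>a b. s (a + b) = s a + s b \<and> s (a * b) = s a * s b)
    \<and> t 1 = 1 \<and> (\<forall>a b. t (a + b) = t a + t b \<and> t (a * b) = t b * t a)
    \<and> (\<forall>c. s (\<iota> c) = \<kappa> c \<and> t (\<iota> c) = \<kappa> c)
    \<and> (\<forall>a b. s a * t b = t b * s a)
    \<comment> \<open>Delta additive and A-bilinear\<close>
    \<and> (\<forall>x y. \<Delta> (x + y) - (\<Delta> x + \<Delta> y) \<in> tensA s t UNIV)
    \<and> (\<forall>a b x. \<Delta> (s a * t b * x) - tmap (\<lambda>u. s a * u) (\<lambda>v. t b * v) (\<Delta> x) \<in> tensA s t UNIV)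
    \<comment> \<open>epsilon additive and A-bilinear\<close>
    \<and> (\<forall>x y. \<epsilon> (x + y) = \<epsilon> x + \<epsilon> y)
    \<and> (\<forall>a b x. \<epsilon> (s a * t b * x) = a * \<epsilon> x * b)
    \<comment> \<open>coassociativity\<close>
    \<and> (\<forall>x. comul_left \<Delta> (\<Delta> x) - comul_right \<Delta> (\<Delta> x) \<in> tens3_rel s t UNIV)
    \<comment> \<open>counitality: (eps (x) H) Delta = id = (H (x) eps) Delta\<close>
    \<and> (\<forall>x. ev (\<lambda>(u, v). s (\<epsilon> u) * v) (\<Delta> x) = x)
    \<and> (\<forall>x. ev (\<lambda>(u, v). t (\<epsilon> v) * u) (\<Delta> x) = x)
    \<comment> \<open>Delta lands in the Takeuchi product and is an algebra map\<close>
    \<and> (\<forall>x a. tmap (\<lambda>u. u * t a) id (\<Delta> x) - tmap id (\<lambda>v. v * s a) (\<Delta> x) \<in> tensA s t UNIV)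
    \<and> (\<forall>x y. \<Delta> (x * y) - tmult (\<Delta> x) (\<Delta> y) \<in> tensA s t UNIV)
    \<and> \<Delta> 1 - Poly_Mapping.single (1, 1) 1 \<in> tensA s t UNIV
    \<comment> \<open>epsilon axioms\<close>
    \<and> (\<forall>x y. \<epsilon> (x * s (\<epsilon> y)) = \<epsilon> (x * y) \<and> \<epsilon> (x * y) = \<epsilon> (x * t (\<epsilon> y)))
    \<and> \<epsilon> 1 = 1"

text \<open>The Galois map beta : H (x)_{A^o} H -> H (x)_A H, x (x) y |-> x_1 (x) x_2 y, on representatives.\<close>
definition galois_beta :: "('h::ring_1 \<Rightarrow> ('h \<times> 'h \<Rightarrow>\<^sub>0 int)) \<Rightarrow> ('h \<times> 'h \<Rightarrow>\<^sub>0 int) \<Rightarrow> ('h \<times> 'h \<Rightarrow>\<^sub>0 int)" where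
  "galois_beta \<Delta> X = lift (\<lambda>(x, y). tmap id (\<lambda>v. v * y) (\<Delta> x)) X"

definition left_hopf_algebroid ::
  "('k::field \<Rightarrow> 'a::ring_1) \<Rightarrow> ('k \<Rightarrow> 'h::ring_1) \<Rightarrow> ('a \<Rightarrow> 'h) \<Rightarrow> ('a \<Rightarrow> 'h)
   \<Rightarrow> ('h \<Rightarrow> ('h \<times> 'h \<Rightarrow>\<^sub>0 int)) \<Rightarrow> ('h \<Rightarrow> 'a) \<Rightarrow> bool" where
  "left_hopf_algebroid \<iota> \<kappa> s t \<Delta> \<epsilon> \<longleftrightarrow> left_bialgebroid \<iota> \<kappa> s t \<Delta> \<epsilon>
    \<and> (\<forall>X Y. galois_beta \<Delta> X - galois_beta \<Delta> Y \<in> tensA s t UNIV \<longrightarrow> X - Y \<in> tensAo t)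
    \<and> (\<forall>Z. \<exists>X. galois_beta \<Delta> X - Z \<in> tensA s t UNIV)"

text \<open>gamma(B) is contained in (the image of) B (x)_{A^o} H: for each b in B, gamma(b) = beta^{-1}(b (x) 1)
has a representative supported on B x H.\<close>
definition gamma_in :: "('a \<Rightarrow> 'h::ring_1) \<Rightarrow> ('a \<Rightarrow> 'h) \<Rightarrow> ('h \<Rightarrow> ('h \<times> 'h \<Rightarrow>\<^sub>0 int)) \<Rightarrow> 'h set \<Rightarrow> bool" where
  "gamma_in s t \<Delta> B \<longleftrightarrow> (\<forall>b\<in>B. \<exists>X. Poly_Mapping.keys X \<subseteq> B \<times> UNIV
      \<and> galois_beta \<Delta> X - Poly_Mapping.single (b, 1) 1 \<in> tensA s t UNIV)"

definition ab_grp :: "'m set \<Rightarrow> ('m \<Rightarrow> 'm \<Rightarrow> 'm) \<Rightarrow> 'm \<Rightarrow> bool" where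
  "ab_grp M p z \<longleftrightarrow> z \<in> M \<and> (\<forall>x\<in>M. \<forall>y\<in>M. p x y \<in> M)
    \<and> (\<forall>x\<in>M. \<forall>y\<in>M. \<forall>w\<in>M. p (p x y) w = p x (p y w))
    \<and> (\<forall>x\<in>M. \<forall>y\<in>M. p x y = p y x) \<and> (\<forall>x\<in>M. p z x = x)
    \<and> (\<forall>x\<in>M. \<exists>y\<in>M. p x y = z)"

definition rmod :: "'r::ring_1 set \<Rightarrow> 'm set \<Rightarrow> ('m \<Rightarrow> 'm \<Rightarrow> 'm) \<Rightarrow> 'm \<Rightarrow> ('m \<Rightarrow> 'r \<Rightarrow> 'm) \<Rightarrow> bool" where
  "rmod R M p z act \<longleftrightarrow> ab_grp M p z
    \<and> (\<forall>m\<in>M. \<forall>r\<in>R. act m r \<in> M)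
    \<and> (\<forall>m\<in>M. \<forall>m'\<in>M. \<forall>r\<in>R. act (p m m') r = p (act m r) (act m' r))
    \<and> (\<forall>m\<in>M. \<forall>r\<in>R. \<forall>r'\<in>R. act m (r + r') = p (act m r) (act m r'))
    \<and> (\<forall>m\<in>M. \<forall>r\<in>R. \<forall>r'\<in>R. act (act m r) r' = act m (r * r'))
    \<and> (\<forall>m\<in>M. act m 1 = m)"

definition lmod :: "'r::ring_1 set \<Rightarrow> 'm set \<Rightarrow> ('m \<Rightarrow> 'm \<Rightarrow> 'm) \<Rightarrow> 'm \<Rightarrow> ('r \<Rightarrow> 'm \<Rightarrow> 'm) \<Rightarrow> bool" where
  "lmod R M p z act \<longleftrightarrow> ab_grp M p z
    \<and> (\<forall>m\<in>M. \<forall>r\<in>R. act r m \<in> M)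
    \<and> (\<forall>m\<in>M. \<forall>m'\<in>M. \<forall>r\<in>R. act r (p m m') = p (act r m) (act r m'))
    \<and> (\<forall>m\<in>M. \<forall>r\<in>R. \<forall>r'\<in>R. act (r + r') m = p (act r m) (act r' m))
    \<and> (\<forall>m\<in>M. \<forall>r\<in>R. \<forall>r'\<in>R. act r (act r' m) = act (r * r') m)
    \<and> (\<forall>m\<in>M. act 1 m = m)"

definition rmod_hom :: "'r::ring_1 set \<Rightarrow> 'm set \<Rightarrow> ('m \<Rightarrow> 'm \<Rightarrow> 'm) \<Rightarrow> ('m \<Rightarrow> 'r \<Rightarrow> 'm)
    \<Rightarrow> 'n set \<Rightarrow> ('n \<Rightarrow> 'n \<Rightarrow> 'n) \<Rightarrow> ('n \<Rightarrow> 'r \<Rightarrow> 'n) \<Rightarrow> ('m \<Rightarrow> 'n) \<Rightarrow> bool" where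
  "rmod_hom R M p act N q act' f \<longleftrightarrow> (\<forall>m\<in>M. f m \<in> N)
    \<and> (\<forall>m\<in>M. \<forall>m'\<in>M. f (p m m') = q (f m) (f m'))
    \<and> (\<forall>m\<in>M. \<forall>r\<in>R. f (act m r) = act' (f m) r)"

text \<open>{}_s H is flat as a left A-module: tensoring (over A) injective maps of right A-modules
with {}_s H preserves injectivity. Test modules are taken with carriers in the type 'a list
(large enough to contain every finitely generated right A-module up to isomorphism, in particular
all right ideals of A).\<close>
definition s_flat :: "('a::ring_1 \<Rightarrow> 'h::ring_1) \<Rightarrow> bool" where
  "s_flat s \<longleftrightarrow> (\<forall>(M1::'a list set) p1 z1 a1 (M2::'a list set) p2 z2 a2 f.
     rmod (UNIV::'a set) M1 p1 z1 a1 \<and> rmod (UNIV::'a set) M2 p2 z2 a2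
     \<and> rmod_hom UNIV M1 p1 a1 M2 p2 a2 f \<and> inj_on f M1 \<longrightarrow>
     (\<forall>X. Poly_Mapping.keys X \<subseteq> M1 \<times> (UNIV::'h set) \<longrightarrow>
        tmap f id X \<in> tens_rel p2 (+) a2 (\<lambda>a h. s a * h) M2 UNIV UNIV \<longrightarrow>
        X \<in> tens_rel p1 (+) a1 (\<lambda>a h. s a * h) M1 UNIV UNIV))"

text \<open>The inclusion B -> H is a pure morphism of right B-modules: for every left B-module M,
B (x)_B M -> H (x)_B M is injective. Test modules have carriers in the type 'h list
(large enough for all finitely presented left B-modules).\<close>
definition pure_incl :: "'h::ring_1 set \<Rightarrow> bool" where
  "pure_incl B \<longleftrightarrow> (\<forall>(M::'h list set) p z act. lmod B M p z act \<longrightarrow>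
     (\<forall>X. Poly_Mapping.keys X \<subseteq> B \<times> M \<longrightarrow>
        X \<in> tens_rel (+) p (\<lambda>h b. h * b) act UNIV M B \<longrightarrow>
        X \<in> tens_rel (+) p (\<lambda>h b. h * b) act B M B))"

definition subalgebra :: "'h::ring_1 set \<Rightarrow> bool" where
  "subalgebra B \<longleftrightarrow> 1 \<in> B \<and> (\<forall>x\<in>B. \<forall>y\<in>B. x + y \<in> B \<and> x * y \<in> B) \<and> (\<forall>x\<in>B. - x \<in> B)"

text \<open>B is a right H-comodule A^o-subring of H via t: a subalgebra containing t(A) with a coassociative,
counital, right A-linear coaction delta : B -> B (x)_A H such that (iota (x) H) delta = Delta iota.\<close>
definition comodule_subring ::
  "('a::ring_1 \<Rightarrow> 'h::ring_1) \<Rightarrow> ('a \<Rightarrow> 'h) \<Rightarrow> ('h \<Rightarrow> ('h \<times> 'h \<Rightarrow>\<^sub>0 int)) \<Rightarrow> ('h \<Rightarrow> 'a) \<Rightarrow> 'h set \<Rightarrow> bool" where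
  "comodule_subring s t \<Delta> \<epsilon> B \<longleftrightarrow> subalgebra B \<and> range t \<subseteq> B \<and>
    (\<exists>\<delta>. (\<forall>b\<in>B. Poly_Mapping.keys (\<delta> b) \<subseteq> B \<times> UNIV)
      \<and> (\<forall>b\<in>B. \<forall>b'\<in>B. \<delta> (b + b') - (\<delta> b + \<delta> b') \<in> tensA s t B)
      \<and> (\<forall>b\<in>B. \<forall>a. \<delta> (t a * b) - tmap id (\<lambda>h. t a * h) (\<delta> b) \<in> tensA s t B)
      \<and> (\<forall>b\<in>B. ev (\<lambda>(u, v). t (\<epsilon> v) * u) (\<delta> b) = b)
      \<and> (\<forall>b\<in>B. comul_left \<delta> (\<delta> b) - comul_right \<Delta> (\<delta> b) \<in> tens3_rel s t B)
      \<and> (\<forall>b\<in>B. \<delta> b - \<Delta> b \<in> tensA s t UNIV))"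

inductive_set left_ideal_gen :: "'h::ring_1 set \<Rightarrow> 'h set" for S where
  lig_zero: "0 \<in> left_ideal_gen S"
| lig_gen: "b \<in> S \<Longrightarrow> h * b \<in> left_ideal_gen S"
| lig_add: "x \<in> left_ideal_gen S \<Longrightarrow> y \<in> left_ideal_gen S \<Longrightarrow> x + y \<in> left_ideal_gen S"

definition Bplus :: "('h \<Rightarrow> 'a::zero) \<Rightarrow> 'h set \<Rightarrow> 'h set" where
  "Bplus \<epsilon> B = {b \<in> B. \<epsilon> b = 0}"

text \<open>Quotient H/I by a left ideal I as a set of cosets; right A-module via t.\<close>
definition coset :: "'h::ring_1 set \<Rightarrow> 'h \<Rightarrow> 'h set" where
  "coset I x = {x + i | i. i \<in> I}"

definition coset_add :: "'h::ring_1 set \<Rightarrow> 'h set \<Rightarrow> 'h set \<Rightarrow> 'h set" where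
  "coset_add I X Y = coset I ((SOME x. x \<in> X) + (SOME y. y \<in> Y))"

definition coset_act :: "('a \<Rightarrow> 'h::ring_1) \<Rightarrow> 'h set \<Rightarrow> 'h set \<Rightarrow> 'a \<Rightarrow> 'h set" where
  "coset_act t I X a = coset I (t a * (SOME x. x \<in> X))"

text \<open>H^{co H/I} = {x | sum pi(x_1) (x) x_2 = pi(1) (x) x in (H/I) (x)_A H}.\<close>
definition coinv :: "('a \<Rightarrow> 'h::ring_1) \<Rightarrow> ('a \<Rightarrow> 'h) \<Rightarrow> ('h \<Rightarrow> ('h \<times> 'h \<Rightarrow>\<^sub>0 int)) \<Rightarrow> 'h set \<Rightarrow> 'h set" where
  "coinv s t \<Delta> I = {x. tmap (coset I) id (\<Delta> x) - Poly_Mapping.single (coset I 1, x) 1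
      \<in> tens_rel (coset_add I) (+) (coset_act t I) (\<lambda>a y. s a * y) (range (coset I)) UNIV UNIV}"

end

theory Submission
  imports Defs
begin

text \<open>
  The inclusion \<open>B \<subseteq> H\<^bsup>co H/H B\<^sup>+\<^esup>\<close> is formal: on \<open>B\<close> the projection \<open>\<pi>\<close> satisfies
  \<open>\<pi>(u) = \<pi>(1) \<epsilon>(u)\<close>, and \<open>\<Delta>(B) \<subseteq> B \<otimes>\<^sub>A H\<close>, so counitality gives \<open>\<pi>(b\<^sub>1) \<otimes> b\<^sub>2 = \<pi>(1) \<otimes> b\<close>.

  For the converse consider \<open>\<rho> \<circ> \<gamma> : H \<otimes>\<^sub>A H \<rightarrow> H \<otimes>\<^sub>B H/B\<close>, where \<open>\<gamma> = \<beta>\<^sup>-\<^sup>1\<close> and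
  \<open>\<rho>(x \<otimes> y) = x \<otimes> [y]\<close> (well defined on \<open>H \<otimes>\<^bsub>A\<^sup>o\<^esub> H\<close> because \<open>t(A) \<subseteq> B\<close>). Since \<open>\<gamma>\<close> is
  anti-multiplicative and \<open>\<gamma>(B) \<subseteq> B \<otimes>\<^bsub>A\<^sup>o\<^esub> H\<close>, the map \<open>\<rho> \<circ> \<gamma>\<close> vanishes on \<open>H B\<^sup>+ \<otimes>\<^sub>A H\<close> and
  so factors through \<open>H/H B\<^sup>+ \<otimes>\<^sub>A H\<close>. Applied to the coinvariance equation
  \<open>\<pi>(x\<^sub>1) \<otimes> x\<^sub>2 = \<pi>(1) \<otimes> x\<close> it yields \<open>x \<otimes> [1] = 1 \<otimes> [x]\<close>, i.e. \<open>1 \<otimes> [x] = 0\<close> in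
  \<open>H \<otimes>\<^sub>B H/B\<close>. By purity this already holds in \<open>B \<otimes>\<^sub>B H/B \<cong> H/B\<close>, so \<open>x \<in> B\<close>.
\<close>

lemma lift_eq_frag_extend: "lift F X = frag_extend F X"
proof -
  have cmul: "frag_cmul c Y
      = (\<Sum>q\<in>Poly_Mapping.keys Y. Poly_Mapping.single q (c * Poly_Mapping.lookup Y q))" for c Y
    by (rule poly_mapping_eqI) (auto simp: lookup_sum lookup_single when_def in_keys_iff)
  show ?thesis
    unfolding lift_def frag_extend_def by (simp add: cmul)
qed

lemma tmap_eq_frag_extend: "tmap f g X = frag_extend (\<lambda>(x, y). frag_of (f x, g y)) X"
  unfolding tmap_def lift_eq_frag_extend ..

lemma tmult_eq_frag_extend:
  "tmult X Y = frag_extend (\<lambda>(x1, x2). frag_extend (\<lambda>(y1, y2). frag_of (x1 * y1, x2 * y2)) Y) X"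
  unfolding tmult_def lift_eq_frag_extend ..

lemma frag_extend_frag_extend:
  "frag_extend G (frag_extend F X) = frag_extend (\<lambda>p. frag_extend G (F p)) X"
  using subset_UNIV by (induction X rule: frag_induction) (auto simp: frag_extend_diff)

lemma frag_extend_fun_add: "frag_extend (\<lambda>p. F p + G p) X = frag_extend F X + frag_extend G X"
  using subset_UNIV by (induction X rule: frag_induction) (auto simp: frag_extend_diff)

lemma frag_extend_fun_diff: "frag_extend (\<lambda>p. F p - G p) X = frag_extend F X - frag_extend G X"
  using subset_UNIV by (induction X rule: frag_induction) (auto simp: frag_extend_diff)

lemma frag_extend_additive:
  assumes "\<And>a b. G (a + b) = G a + G b"
  shows "G (frag_extend F X) = frag_extend (\<lambda>p. G (F p)) X"
proof -
  have diff: "G (a - b) = G a - G b" for a b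
    using assms[of "a - b" b] by (simp add: algebra_simps)
  have zero: "G 0 = 0"
    using assms[of 0 0] by simp
  show ?thesis
    using subset_UNIV by (induction X rule: frag_induction) (auto simp: frag_extend_diff diff zero)
qed

lemma tmap_frag_of [simp]: "tmap f g (frag_of (x, y)) = frag_of (f x, g y)"
  by (simp add: tmap_eq_frag_extend)

lemma tmap_zero [simp]: "tmap f g 0 = 0"
  by (simp add: tmap_eq_frag_extend)

lemma tmap_add: "tmap f g (X + Y) = tmap f g X + tmap f g Y"
  by (simp add: tmap_eq_frag_extend frag_extend_add)

lemma tmap_diff: "tmap f g (X - Y) = tmap f g X - tmap f g Y"
  by (simp add: tmap_eq_frag_extend frag_extend_diff)

lemma tmap_tmap: "tmap f g (tmap f' g' X) = tmap (\<lambda>x. f (f' x)) (\<lambda>y. g (g' y)) X"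
  by (simp add: tmap_eq_frag_extend frag_extend_frag_extend case_prod_unfold)

lemma tmap_frag_extend: "tmap f g (frag_extend F X) = frag_extend (\<lambda>p. tmap f g (F p)) X"
  by (simp add: tmap_eq_frag_extend frag_extend_frag_extend)

lemma tmap_ident_eq_id [simp]:
  "tmap (\<lambda>x. x) g X = tmap id g X" "tmap f (\<lambda>y. y) X = tmap f id X"
  by (simp_all add: id_def)

lemma tmap_id_id [simp]: "tmap id id X = X"
  using frag_expansion[of X] by (simp add: tmap_eq_frag_extend case_prod_unfold)

lemma tmult_add_right: "tmult X (Y + Y') = tmult X Y + tmult X Y'"
  by (simp add: tmult_eq_frag_extend frag_extend_add case_prod_unfold frag_extend_fun_add)

lemma tmult_diff_right: "tmult X (Y - Y') = tmult X Y - tmult X Y'"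
  by (simp add: tmult_eq_frag_extend frag_extend_diff case_prod_unfold frag_extend_fun_diff)

lemma tmult_frag_of_right: "tmult X (frag_of (y1, y2)) = tmap (\<lambda>x. x * y1) (\<lambda>x. x * y2) X"
  by (simp add: tmult_eq_frag_extend tmap_eq_frag_extend case_prod_unfold)

lemma tmult_tmap_right:
  "tmult X (tmap id (\<lambda>w. w * c) Y) = tmap id (\<lambda>w. w * c) (tmult X Y)"
  using subset_UNIV
proof (induction Y rule: frag_induction)
  case zero
  then show ?case
    using tmult_diff_right[of X 0 0] by simp
next
  case (one p)
  then show ?case
    by (cases p) (simp add: tmult_frag_of_right tmap_tmap mult.assoc)
next
  case (diff a b)
  then show ?case
    by (simp add: tmap_diff tmult_diff_right)
qed

lemma ev_eq_sum:
  assumes "finite S" "Poly_Mapping.keys X \<subseteq> S"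
  shows "ev f X = (\<Sum>p\<in>S. of_int (Poly_Mapping.lookup X p) * f p)"
  unfolding ev_def
  by (rule sum.mono_neutral_left) (use assms in \<open>auto simp: in_keys_iff\<close>)

lemma ev_add: "ev f (X + Y) = ev f X + ev f Y"
proof -
  let ?S = "Poly_Mapping.keys X \<union> Poly_Mapping.keys Y"
  have "Poly_Mapping.keys (X + Y) \<subseteq> ?S"
    by (rule keys_add)
  then have "ev f (X + Y) = (\<Sum>p\<in>?S. of_int (Poly_Mapping.lookup (X + Y) p) * f p)"
    by (intro ev_eq_sum) auto
  also have "\<dots> = (\<Sum>p\<in>?S. of_int (Poly_Mapping.lookup X p) * f p)
                 + (\<Sum>p\<in>?S. of_int (Poly_Mapping.lookup Y p) * f p)"
    by (simp add: lookup_add distrib_right sum.distrib)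
  also have "\<dots> = ev f X + ev f Y"
    by (subst (1 2) ev_eq_sum) auto
  finally show ?thesis .
qed

lemma ev_zero [simp]: "ev f 0 = 0"
  by (simp add: ev_def)

lemma ev_diff: "ev f (X - Y) = ev f X - ev f Y"
  using ev_add[of f "X - Y" Y] by (simp add: algebra_simps)

lemma ev_frag_of [simp]: "ev f (frag_of p) = f p"
  by (simp add: ev_def)

lemma ev_frag_extend: "ev f (frag_extend G X) = ev (\<lambda>p. ev f (G p)) X"
  using subset_UNIV by (induction X rule: frag_induction) (auto simp: frag_extend_diff ev_diff)

lemma ev_mult_right: "ev (\<lambda>p. f p * c) X = ev f X * c"
  using subset_UNIV by (induction X rule: frag_induction) (auto simp: ev_diff algebra_simps)

locale additive_subgroup =
  fixes R :: "'a::ab_group_add set"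
  assumes zero_mem [simp]: "0 \<in> R"
    and add_mem: "x \<in> R \<Longrightarrow> y \<in> R \<Longrightarrow> x + y \<in> R"
    and uminus_mem: "x \<in> R \<Longrightarrow> - x \<in> R"
begin

lemma diff_mem: "x \<in> R \<Longrightarrow> y \<in> R \<Longrightarrow> x - y \<in> R"
  using add_mem[of x "- y"] uminus_mem[of y] by simp

lemma uminus_mem_iff [simp]: "- x \<in> R \<longleftrightarrow> x \<in> R"
  using uminus_mem[of x] uminus_mem[of "- x"] by auto

definition cong :: "'a \<Rightarrow> 'a \<Rightarrow> bool" where
  "cong x y \<longleftrightarrow> x - y \<in> R"

lemma cong_refl [simp]: "cong x x"
  by (simp add: cong_def)

lemma cong_sym: "cong x y \<Longrightarrow> cong y x"
  using uminus_mem by (fastforce simp: cong_def)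

lemma cong_trans [trans]: "cong x y \<Longrightarrow> cong y z \<Longrightarrow> cong x z"
  using add_mem[of "x - y" "y - z"] by (simp add: cong_def)

lemma cong_eq_trans [trans]: "cong x y \<Longrightarrow> y = z \<Longrightarrow> cong x z"
  and eq_cong_trans [trans]: "x = y \<Longrightarrow> cong y z \<Longrightarrow> cong x z"
  by simp_all

lemma cong_add: "cong x x' \<Longrightarrow> cong y y' \<Longrightarrow> cong (x + y) (x' + y')"
  using add_mem[of "x - x'" "y - y'"] by (simp add: cong_def algebra_simps)

lemma cong_diff: "cong x x' \<Longrightarrow> cong y y' \<Longrightarrow> cong (x - y) (x' - y')"
  using diff_mem[of "x - x'" "y - y'"] by (simp add: cong_def algebra_simps)

lemma cong_0_iff [simp]: "cong x 0 \<longleftrightarrow> x \<in> R"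
  by (simp add: cong_def)

lemma cong_mem: "cong x y \<Longrightarrow> y \<in> R \<Longrightarrow> x \<in> R"
  using add_mem[of "x - y" y] by (simp add: cong_def)

end

locale frag_subgroup = additive_subgroup R for R :: "('x \<Rightarrow>\<^sub>0 int) set"
begin

lemma frag_extend_cong:
  assumes "Poly_Mapping.keys X \<subseteq> S" and "\<And>p. p \<in> S \<Longrightarrow> cong (F p) (G p)"
  shows "cong (frag_extend F X) (frag_extend G X)"
  using assms(1)
  by (induction X rule: frag_induction) (auto simp: frag_extend_diff assms(2) cong_diff)

lemma frag_extend_mem:
  assumes "Poly_Mapping.keys X \<subseteq> S" and "\<And>p. p \<in> S \<Longrightarrow> F p \<in> R"
  shows "frag_extend F X \<in> R"
  using frag_extend_cong[OF assms(1), of F "\<lambda>_. 0"] assms(2) by (simp add: frag_extend_eq_0)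

lemma frag_extend_ev_cong:
  assumes "\<And>a b. cong (L (a + b)) (L a + L b)"
  shows "cong (frag_extend (\<lambda>p. L (f p)) X) (L (ev f X))"
  using subset_UNIV
proof (induction X rule: frag_induction)
  case zero
  then show ?case
    using assms[of 0 0] by (simp add: cong_def)
next
  case (diff X Y)
  have "cong (L (ev f X) - L (ev f Y)) (L (ev f X - ev f Y))"
    using assms[of "ev f X - ev f Y" "ev f Y"] by (simp add: cong_def algebra_simps)
  with diff show ?case
    by (auto simp: frag_extend_diff ev_diff intro: cong_trans[OF cong_diff])
qed simp

end

lemma frag_subgroup_tens_rel: "frag_subgroup (tens_rel pM pN aM aN M N R)"
  by unfold_locales (auto intro: tens_rel.intros)

lemma tens_rel_image_mem:
  assumes "X \<in> tens_rel pM pN aM aN M N R" and "additive_subgroup R'"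
    and additive: "\<And>x y. \<phi> (x + y) = \<phi> x + \<phi> y"
    and "\<And>m m' n. m \<in> M \<Longrightarrow> m' \<in> M \<Longrightarrow> n \<in> N \<Longrightarrow>
       \<phi> (frag_of (pM m m', n) - frag_of (m, n) - frag_of (m', n)) \<in> R'"
    and "\<And>m n n'. m \<in> M \<Longrightarrow> n \<in> N \<Longrightarrow> n' \<in> N \<Longrightarrow>
       \<phi> (frag_of (m, pN n n') - frag_of (m, n) - frag_of (m, n')) \<in> R'"
    and "\<And>m r n. m \<in> M \<Longrightarrow> r \<in> R \<Longrightarrow> n \<in> N \<Longrightarrow>
       \<phi> (frag_of (aM m r, n) - frag_of (m, aN r n)) \<in> R'"
  shows "\<phi> X \<in> R'"
proof -
  interpret R': additive_subgroup R' by fact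
  have zero: "\<phi> 0 = 0"
    using additive[of 0 0] by simp
  have uminus: "\<phi> (- x) = - \<phi> x" for x
    using additive[of "- x" x] zero by (simp add: eq_neg_iff_add_eq_0)
  from assms(1) show ?thesis
    by (induction rule: tens_rel.induct)
       (auto simp: zero uminus additive assms(4-6) intro: R'.add_mem)
qed

lemma left_ideal_gen_mult_left:
  "x \<in> left_ideal_gen S \<Longrightarrow> c * x \<in> left_ideal_gen S"
proof (induction rule: left_ideal_gen.induct)
  case (lig_gen b h)
  then show ?case
    using left_ideal_gen.lig_gen[of b S "c * h"] by (simp add: mult.assoc)
next
  case (lig_add x y)
  then show ?case
    using left_ideal_gen.lig_add[of "c * x" S "c * y"] by (simp add: distrib_left)
qed (simp add: left_ideal_gen.lig_zero)

locale ring_subgroup = additive_subgroup R for R :: "'r::ring_1 set"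
begin

lemma some_coset_cong: "cong (SOME r. r \<in> coset R h) h"
proof -
  have "(SOME r. r \<in> coset R h) \<in> coset R h"
    by (rule someI[of _ "h + 0"]) (auto simp: coset_def)
  then show ?thesis
    by (auto simp: coset_def cong_def)
qed

lemma coset_eq_iff: "coset R a = coset R b \<longleftrightarrow> cong a b"
proof
  assume "coset R a = coset R b"
  then show "cong a b"
    using some_coset_cong[of a] some_coset_cong[of b] by (metis cong_sym cong_trans)
next
  have coset_subset: "coset R x \<subseteq> coset R y" if "cong x y" for x y
  proof
    fix z
    assume "z \<in> coset R x"
    then obtain i where "z = y + ((x - y) + i)" "i \<in> R"
      by (auto simp: coset_def)
    with that show "z \<in> coset R y"
      unfolding coset_def cong_def by (blast intro: add_mem)
  qed
  assume "cong a b"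
  then show "coset R a = coset R b"
    using coset_subset cong_sym by blast
qed

lemma coset_add_coset [simp]: "coset_add R (coset R a) (coset R b) = coset R (a + b)"
  unfolding coset_add_def coset_eq_iff using some_coset_cong by (blast intro: cong_add)

lemma coset_act_coset:
  assumes "\<And>x. x \<in> R \<Longrightarrow> t a * x \<in> R"
  shows "coset_act t R (coset R m) a = coset R (t a * m)"
  unfolding coset_act_def coset_eq_iff cong_def
  using assms[OF some_coset_cong[of m, unfolded cong_def]] by (simp add: algebra_simps)

end

lemma ring_subgroup_left_ideal_gen: "ring_subgroup (left_ideal_gen S)"
  using left_ideal_gen_mult_left[of _ S "- 1"]
  by unfold_locales (auto intro: left_ideal_gen.intros)

section \<open>The left \<open>B\<close>-module \<open>H/B\<close>\<close>

locale subalgebra_quotient =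
  fixes B :: "'h::ring_1 set"
  assumes subalgebra: "subalgebra B"
begin

sublocale ring_subgroup B
proof
  show "0 \<in> B"
    using subalgebra unfolding subalgebra_def by (metis add.right_inverse)
qed (use subalgebra in \<open>auto simp: subalgebra_def\<close>)

lemma one_mem: "1 \<in> B"
  using subalgebra by (simp add: subalgebra_def)

lemma mult_mem: "x \<in> B \<Longrightarrow> y \<in> B \<Longrightarrow> x * y \<in> B"
  using subalgebra by (simp add: subalgebra_def)

text \<open>The left \<open>B\<close>-module \<open>H/B\<close> is realised inside \<open>'h list\<close>, the carrier type
  quantified over in \<^const>\<open>pure_incl\<close>, as singleton lists of coset representatives.\<close>
definition cls :: "'h \<Rightarrow> 'h list" where
  "cls h = [SOME r. r \<in> coset B h]"

definition cls_add :: "'h list \<Rightarrow> 'h list \<Rightarrow> 'h list" where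
  "cls_add m m' = cls (hd m + hd m')"

definition cls_act :: "'h \<Rightarrow> 'h list \<Rightarrow> 'h list" where
  "cls_act b m = cls (b * hd m)"

lemma hd_cls_cong: "cong (hd (cls h)) h"
  by (simp add: cls_def some_coset_cong)

lemma cls_eq_iff: "cls a = cls b \<longleftrightarrow> cong a b"
proof
  assume "cls a = cls b"
  then show "cong a b"
    using hd_cls_cong[of a] hd_cls_cong[of b] by (metis cong_sym cong_trans)
qed (simp add: cls_def coset_eq_iff[symmetric])

lemma cls_add_cls [simp]: "cls_add (cls a) (cls b) = cls (a + b)"
  using hd_cls_cong[of a] hd_cls_cong[of b] by (simp add: cls_add_def cls_eq_iff cong_add)

lemma cls_act_cls [simp]: "r \<in> B \<Longrightarrow> cls_act r (cls a) = cls (r * a)"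
  using mult_mem[OF _ hd_cls_cong[of a, unfolded cong_def], of r]
  by (simp add: cls_act_def cls_eq_iff cong_def right_diff_distrib)

lemma lmod_cls: "lmod B (range cls) cls_add (cls 0) cls_act"
proof -
  have "\<exists>y. cls (x + y) = cls 0" for x
    by (rule exI[of _ "- x"]) simp
  then show ?thesis
    unfolding lmod_def ab_grp_def
    by (auto simp: cls_eq_iff cong_def algebra_simps add_mem mult_mem one_mem)
qed

abbreviation relB :: "('h \<times> 'h list \<Rightarrow>\<^sub>0 int) set" where
  "relB \<equiv> tens_rel (+) cls_add (\<lambda>h b. h * b) cls_act UNIV (range cls) B"

sublocale relB: frag_subgroup relB
  by (rule frag_subgroup_tens_rel)

text \<open>Purity is applied to \<open>1 \<otimes> [x]\<close>; then \<open>B \<otimes>\<^sub>B H/B \<cong> H/B\<close>, via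
  \<open>b \<otimes> [h] \<mapsto> b h\<close> modulo \<open>B\<close>, gives \<open>[x] = 0\<close>.\<close>
lemma pure_incl_cls_mem:
  assumes "pure_incl B" and "frag_of (1, cls x) \<in> relB"
  shows "x \<in> B"
proof -
  have "frag_of (1, cls x) \<in> tens_rel (+) cls_add (\<lambda>h b. h * b) cls_act B (range cls) B"
    using assms lmod_cls one_mem unfolding pure_incl_def by auto
  then have "ev (\<lambda>(b, m). b * hd m) (frag_of (1, cls x)) \<in> B"
  proof (rule tens_rel_image_mem[OF _ additive_subgroup_axioms ev_add])
    fix m n n'
    assume "m \<in> B"
    then have "m * (hd (cls (hd n + hd n')) - (hd n + hd n')) \<in> B"
      using hd_cls_cong mult_mem unfolding cong_def by blast
    then show "ev (\<lambda>(b, m). b * hd m) (frag_of (m, cls_add n n') - frag_of (m, n) - frag_of (m, n'))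
        \<in> B"
      by (simp add: ev_diff ev_add cls_add_def algebra_simps)
  next
    fix m r n
    assume "m \<in> B"
    then have "m * (r * hd n - hd (cls (r * hd n))) \<in> B"
      using hd_cls_cong cong_sym mult_mem unfolding cong_def by blast
    then show "ev (\<lambda>(b, m). b * hd m) (frag_of (m * r, n) - frag_of (m, cls_act r n)) \<in> B"
      by (simp add: ev_diff cls_act_def algebra_simps)
  qed (simp add: ev_diff ev_add algebra_simps)
  then show ?thesis
    using cong_mem[OF cong_sym[OF hd_cls_cong[of x]]] by simp
qed

end

locale bialgebroid =
  fixes \<iota> :: "'k::field \<Rightarrow> 'a::ring_1" and \<kappa> :: "'k \<Rightarrow> 'h::ring_1"
    and s :: "'a \<Rightarrow> 'h" and t :: "'a \<Rightarrow> 'h"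
    and \<Delta> :: "'h \<Rightarrow> ('h \<times> 'h \<Rightarrow>\<^sub>0 int)" and \<epsilon> :: "'h \<Rightarrow> 'a"
  assumes left_bialgebroid: "left_bialgebroid \<iota> \<kappa> s t \<Delta> \<epsilon>"
begin

abbreviation relA :: "('h \<times> 'h \<Rightarrow>\<^sub>0 int) set" where
  "relA \<equiv> tens_rel (+) (+) (\<lambda>x a. t a * x) (\<lambda>a y. s a * y) UNIV UNIV UNIV"

abbreviation relQ :: "'h set \<Rightarrow> ('h set \<times> 'h \<Rightarrow>\<^sub>0 int) set" where
  "relQ I \<equiv> tens_rel (coset_add I) (+) (coset_act t I) (\<lambda>a y. s a * y) (range (coset I)) UNIV UNIV"

sublocale relA: frag_subgroup relA
  by (rule frag_subgroup_tens_rel)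

lemma tensA_UNIV: "tensA s t UNIV = relA"
  by (simp add: tensA_def)

lemma s_add: "s (a + b) = s a + s b"
  using left_bialgebroid by (simp add: left_bialgebroid_def)

lemma s_mult: "s (a * b) = s a * s b"
  using left_bialgebroid by (simp add: left_bialgebroid_def)

lemma s_one: "s 1 = 1"
  using left_bialgebroid by (simp add: left_bialgebroid_def)

lemma eps_add: "\<epsilon> (x + y) = \<epsilon> x + \<epsilon> y"
  using left_bialgebroid by (simp add: left_bialgebroid_def)

lemma eps_st: "\<epsilon> (s a * t b * x) = a * \<epsilon> x * b"
  using left_bialgebroid unfolding left_bialgebroid_def by blast

lemma eps_one: "\<epsilon> 1 = 1"
  using left_bialgebroid by (simp add: left_bialgebroid_def)

lemma counit_left: "ev (\<lambda>(u, v). s (\<epsilon> u) * v) (\<Delta> x) = x"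
  using left_bialgebroid by (simp add: left_bialgebroid_def)

lemma Delta_one: "relA.cong (\<Delta> 1) (frag_of (1, 1))"
  using left_bialgebroid unfolding left_bialgebroid_def tensA_UNIV relA.cong_def by blast

lemma Delta_mult: "relA.cong (\<Delta> (x * y)) (tmult (\<Delta> x) (\<Delta> y))"
  using left_bialgebroid unfolding left_bialgebroid_def tensA_UNIV relA.cong_def by blast

lemma Delta_takeuchi: "relA.cong (tmap (\<lambda>u. u * t a) id (\<Delta> x)) (tmap id (\<lambda>v. v * s a) (\<Delta> x))"
  using left_bialgebroid unfolding left_bialgebroid_def tensA_UNIV relA.cong_def by blast

lemma s_zero: "s 0 = 0"
  using s_add[of 0 0] by simp

lemma eps_diff: "\<epsilon> (x - y) = \<epsilon> x - \<epsilon> y"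
  using eps_add[of "x - y" y] by (simp add: algebra_simps)

lemma eps_t_mult: "\<epsilon> (t a * x) = \<epsilon> x * a"
  using eps_st[of 1 a x] by (simp add: s_one)

lemma eps_t: "\<epsilon> (t a) = a"
  using eps_t_mult[of a 1] by (simp add: eps_one)

lemma tmap_mult_right_mem: "X \<in> relA \<Longrightarrow> tmap (\<lambda>u. u * m) (\<lambda>v. v * n) X \<in> relA"
proof (erule tens_rel_image_mem[OF _ relA.additive_subgroup_axioms tmap_add])
  fix a r b
  have "frag_of ((\<lambda>x a. t a * x) (a * m) r, b * n) - frag_of (a * m, (\<lambda>a y. s a * y) r (b * n))
      \<in> relA"
    by (rule tens_rel.tr_bal) auto
  then show "tmap (\<lambda>u. u * m) (\<lambda>v. v * n) (frag_of (t r * a, b) - frag_of (a, s r * b)) \<in> relA"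
    by (simp add: tmap_diff mult.assoc)
qed (auto simp: tmap_diff distrib_right intro: tens_rel.intros)

lemma tmap_mult_right_cong:
  "relA.cong X Y \<Longrightarrow> relA.cong (tmap (\<lambda>u. u * m) (\<lambda>v. v * n) X) (tmap (\<lambda>u. u * m) (\<lambda>v. v * n) Y)"
  using tmap_mult_right_mem[of "X - Y"] by (simp add: relA.cong_def tmap_diff)

text \<open>The hypothesis says that \<open>X\<close> lies in the Takeuchi product.\<close>
lemma tmult_mem:
  assumes takeuchi: "\<And>a. relA.cong (tmap (\<lambda>u. u * t a) id X) (tmap id (\<lambda>v. v * s a) X)"
    and "Y \<in> relA"
  shows "tmult X Y \<in> relA"
  using assms(2)
proof (rule tens_rel_image_mem[OF _ relA.additive_subgroup_axioms tmult_add_right])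
  fix a a' b :: 'h
  have "tmult X (frag_of (a + a', b) - frag_of (a, b) - frag_of (a', b)) =
    frag_extend (\<lambda>(x1, x2). frag_of (x1 * a + x1 * a', x2 * b) - frag_of (x1 * a, x2 * b)
      - frag_of (x1 * a', x2 * b)) X"
    by (simp add: tmult_diff_right tmult_frag_of_right tmap_eq_frag_extend frag_extend_fun_diff
        case_prod_unfold distrib_left)
  also have "\<dots> \<in> relA"
    by (rule relA.frag_extend_mem[OF subset_UNIV]) (auto simp: case_prod_unfold intro: tens_rel.intros)
  finally show "tmult X (frag_of (a + a', b) - frag_of (a, b) - frag_of (a', b)) \<in> relA" .
next
  fix a b b' :: 'h
  have "tmult X (frag_of (a, b + b') - frag_of (a, b) - frag_of (a, b')) =
    frag_extend (\<lambda>(x1, x2). frag_of (x1 * a, x2 * b + x2 * b') - frag_of (x1 * a, x2 * b)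
      - frag_of (x1 * a, x2 * b')) X"
    by (simp add: tmult_diff_right tmult_frag_of_right tmap_eq_frag_extend frag_extend_fun_diff
        case_prod_unfold distrib_left)
  also have "\<dots> \<in> relA"
    by (rule relA.frag_extend_mem[OF subset_UNIV]) (auto simp: case_prod_unfold intro: tens_rel.intros)
  finally show "tmult X (frag_of (a, b + b') - frag_of (a, b) - frag_of (a, b')) \<in> relA" .
next
  fix a b :: 'h and r :: 'a
  have "tmult X (frag_of (t r * a, b) - frag_of (a, s r * b)) =
    tmap (\<lambda>u. u * a) (\<lambda>v. v * b) (tmap (\<lambda>u. u * t r) id X - tmap id (\<lambda>v. v * s r) X)"
    by (simp add: tmult_diff_right tmult_frag_of_right tmap_diff tmap_tmap mult.assoc)
  also have "\<dots> \<in> relA"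
    using takeuchi unfolding relA.cong_def by (rule tmap_mult_right_mem)
  finally show "tmult X (frag_of (t r * a, b) - frag_of (a, s r * b)) \<in> relA" .
qed

definition counit_ev :: "('h \<times> 'h \<Rightarrow>\<^sub>0 int) \<Rightarrow> 'h" where
  "counit_ev = ev (\<lambda>(u, v). s (\<epsilon> u) * v)"

lemma counit_ev_Delta: "counit_ev (\<Delta> x) = x"
  by (simp add: counit_ev_def counit_left)

lemma counit_ev_relA: "X \<in> relA \<Longrightarrow> counit_ev X = 0"
proof -
  assume "X \<in> relA"
  then have "counit_ev X \<in> {0}"
    unfolding counit_ev_def
    by (rule tens_rel_image_mem[OF _ _ ev_add])
       (auto simp: additive_subgroup_def ev_diff eps_add s_add distrib_left distrib_right
         eps_t_mult s_mult mult.assoc)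
  then show ?thesis
    by simp
qed

lemma counit_ev_cong: "relA.cong X Y \<Longrightarrow> counit_ev X = counit_ev Y"
  using counit_ev_relA[of "X - Y"] by (simp add: relA.cong_def counit_ev_def ev_diff)

abbreviation HBplus :: "'h set \<Rightarrow> 'h set" where
  "HBplus B \<equiv> left_ideal_gen (Bplus \<epsilon> B)"

lemma tmap_coset_mem:
  assumes "X \<in> relA"
  shows "tmap (coset (left_ideal_gen S)) id X \<in> relQ (left_ideal_gen S)"
proof -
  let ?I = "left_ideal_gen S"
  interpret I: ring_subgroup ?I
    by (rule ring_subgroup_left_ideal_gen)
  have add: "frag_of (coset ?I (m + m'), n) - frag_of (coset ?I m, n) - frag_of (coset ?I m', n)
      \<in> relQ ?I" for m m' n
  proof -
    have "frag_of (coset_add ?I (coset ?I m) (coset ?I m'), n) - frag_of (coset ?I m, n)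
        - frag_of (coset ?I m', n) \<in> relQ ?I"
      by (rule tens_rel.tr_addl) auto
    then show ?thesis
      by simp
  qed
  have bal: "frag_of (coset ?I (t a * m), n) - frag_of (coset ?I m, s a * n) \<in> relQ ?I" for m a n
  proof -
    have "frag_of (coset_act t ?I (coset ?I m) a, n) - frag_of (coset ?I m, s a * n) \<in> relQ ?I"
      by (rule tens_rel.tr_bal) auto
    then show ?thesis
      by (simp add: I.coset_act_coset left_ideal_gen_mult_left)
  qed
  from assms show ?thesis
    by (rule tens_rel_image_mem[OF _ frag_subgroup.axioms[OF frag_subgroup_tens_rel]])
       (auto simp: tmap_add tmap_diff add bal intro: tens_rel.intros)
qed

lemma coset_HBplus:
  assumes "subalgebra B" and "range t \<subseteq> B" and "u \<in> B"
  shows "coset (HBplus B) u = coset_act t (HBplus B) (coset (HBplus B) 1) (\<epsilon> u)"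
proof -
  interpret B: subalgebra_quotient B
    by unfold_locales fact
  interpret I: ring_subgroup "HBplus B"
    by (rule ring_subgroup_left_ideal_gen)
  have "u - t (\<epsilon> u) \<in> Bplus \<epsilon> B"
    using B.diff_mem[OF assms(3)] assms(2) by (auto simp: Bplus_def eps_diff eps_t)
  then have "u - t (\<epsilon> u) * 1 \<in> HBplus B"
    using left_ideal_gen.lig_gen[of _ _ 1] by simp
  then show ?thesis
    by (simp add: I.coset_act_coset left_ideal_gen_mult_left I.coset_eq_iff I.cong_def)
qed

lemma tmap_coset_HBplus:
  assumes "subalgebra B" and "range t \<subseteq> B" and "Poly_Mapping.keys X \<subseteq> B \<times> UNIV"
  shows "tmap (coset (HBplus B)) id X - frag_of (coset (HBplus B) 1, counit_ev X) \<in> relQ (HBplus B)"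
proof -
  interpret Q: frag_subgroup "relQ (HBplus B)"
    by (rule frag_subgroup_tens_rel)
  have "Q.cong (tmap (coset (HBplus B)) id X)
      (frag_extend (\<lambda>(u, v). frag_of (coset (HBplus B) 1, s (\<epsilon> u) * v)) X)"
    unfolding tmap_eq_frag_extend
  proof (rule Q.frag_extend_cong[OF assms(3)])
    fix p :: "'h \<times> 'h"
    assume "p \<in> B \<times> UNIV"
    then obtain u v where p: "p = (u, v)" "u \<in> B"
      by auto
    have "frag_of (coset_act t (HBplus B) (coset (HBplus B) 1) (\<epsilon> u), v)
        - frag_of (coset (HBplus B) 1, s (\<epsilon> u) * v) \<in> relQ (HBplus B)"
      by (rule tens_rel.tr_bal) auto
    then show "Q.cong ((\<lambda>(x, y). frag_of (coset (HBplus B) x, id y)) p)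
        ((\<lambda>(u, v). frag_of (coset (HBplus B) 1, s (\<epsilon> u) * v)) p)"
      by (simp add: p coset_HBplus[OF assms(1,2)] Q.cong_def)
  qed
  also have "Q.cong \<dots> (frag_of (coset (HBplus B) 1, counit_ev X))"
    unfolding counit_ev_def case_prod_unfold
    by (rule Q.frag_extend_ev_cong)
       (auto simp: Q.cong_def diff_diff_eq[symmetric] intro: tens_rel.tr_addr)
  finally show ?thesis
    by (simp add: Q.cong_def)
qed

lemma comodule_subring_subset_coinv:
  assumes "comodule_subring s t \<Delta> \<epsilon> B"
  shows "B \<subseteq> coinv s t \<Delta> (HBplus B)"
proof
  fix b
  assume "b \<in> B"
  obtain \<delta> where \<delta>_keys: "Poly_Mapping.keys (\<delta> b) \<subseteq> B \<times> UNIV"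
    and \<delta>_Delta: "relA.cong (\<delta> b) (\<Delta> b)"
    using assms \<open>b \<in> B\<close> unfolding comodule_subring_def tensA_UNIV relA.cong_def by metis
  have B: "subalgebra B" "range t \<subseteq> B"
    using assms by (simp_all add: comodule_subring_def)
  interpret Q: frag_subgroup "relQ (HBplus B)"
    by (rule frag_subgroup_tens_rel)
  have "tmap (coset (HBplus B)) id (\<Delta> b - \<delta> b) \<in> relQ (HBplus B)"
    using relA.cong_sym[OF \<delta>_Delta] unfolding relA.cong_def by (rule tmap_coset_mem)
  then have "Q.cong (tmap (coset (HBplus B)) id (\<Delta> b)) (tmap (coset (HBplus B)) id (\<delta> b))"
    by (simp add: Q.cong_def tmap_diff)
  also have "Q.cong \<dots> (frag_of (coset (HBplus B) 1, counit_ev (\<delta> b)))"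
    using tmap_coset_HBplus[OF B \<delta>_keys] by (simp add: Q.cong_def)
  also have "counit_ev (\<delta> b) = b"
    using counit_ev_cong[OF \<delta>_Delta] by (simp add: counit_ev_Delta)
  finally show "b \<in> coinv s t \<Delta> (HBplus B)"
    by (simp add: coinv_def Q.cong_def)
qed

end

locale hopf_algebroid =
  fixes \<iota> :: "'k::field \<Rightarrow> 'a::ring_1" and \<kappa> :: "'k \<Rightarrow> 'h::ring_1"
    and s :: "'a \<Rightarrow> 'h" and t :: "'a \<Rightarrow> 'h"
    and \<Delta> :: "'h \<Rightarrow> ('h \<times> 'h \<Rightarrow>\<^sub>0 int)" and \<epsilon> :: "'h \<Rightarrow> 'a"
  assumes left_hopf_algebroid: "left_hopf_algebroid \<iota> \<kappa> s t \<Delta> \<epsilon>"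
begin

sublocale bialgebroid
  using left_hopf_algebroid by unfold_locales (simp add: left_hopf_algebroid_def)

lemma galois_beta_inj: "relA.cong (galois_beta \<Delta> X) (galois_beta \<Delta> Y) \<Longrightarrow> X - Y \<in> tensAo t"
  using left_hopf_algebroid by (simp add: left_hopf_algebroid_def tensA_UNIV relA.cong_def)

lemma galois_beta_surj: "\<exists>X. relA.cong (galois_beta \<Delta> X) Z"
  using left_hopf_algebroid by (simp add: left_hopf_algebroid_def tensA_UNIV relA.cong_def)

lemma galois_beta_eq_frag_extend:
  "galois_beta \<Delta> X = frag_extend (\<lambda>(x, y). tmap id (\<lambda>v. v * y) (\<Delta> x)) X"
  unfolding galois_beta_def lift_eq_frag_extend ..

lemma galois_beta_frag_of [simp]: "galois_beta \<Delta> (frag_of (x, y)) = tmap id (\<lambda>v. v * y) (\<Delta> x)"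
  by (simp add: galois_beta_eq_frag_extend)

lemma galois_beta_zero [simp]: "galois_beta \<Delta> 0 = 0"
  by (simp add: galois_beta_eq_frag_extend)

lemma galois_beta_diff: "galois_beta \<Delta> (X - Y) = galois_beta \<Delta> X - galois_beta \<Delta> Y"
  by (simp add: galois_beta_eq_frag_extend frag_extend_diff)

lemma galois_beta_frag_extend:
  "galois_beta \<Delta> (frag_extend F X) = frag_extend (\<lambda>p. galois_beta \<Delta> (F p)) X"
  by (simp add: galois_beta_eq_frag_extend frag_extend_frag_extend)

lemma galois_beta_tmap_right:
  "galois_beta \<Delta> (tmap id (\<lambda>v. v * y) X) = tmap id (\<lambda>v. v * y) (galois_beta \<Delta> X)"
  using subset_UNIV
proof (induction X rule: frag_induction)
  case (one p)
  then show ?case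
    by (cases p) (simp add: tmap_tmap mult.assoc)
qed (simp_all add: galois_beta_diff tmap_diff)

lemma counit_ev_galois_beta: "counit_ev (galois_beta \<Delta> X) = ev (\<lambda>(u, v). u * v) X"
  using subset_UNIV
proof (induction X rule: frag_induction)
  case (one p)
  obtain u v where p: "p = (u, v)"
    by force
  have "counit_ev (galois_beta \<Delta> (frag_of p))
      = ev (\<lambda>q. (case q of (x, y) \<Rightarrow> s (\<epsilon> x) * y) * v) (\<Delta> u)"
    by (simp add: p counit_ev_def tmap_eq_frag_extend ev_frag_extend case_prod_unfold mult.assoc)
  also have "\<dots> = u * v"
    by (simp add: ev_mult_right counit_left)
  finally show ?case
    by (simp add: p)
qed (simp_all add: galois_beta_diff ev_diff counit_ev_def)

definition gamma :: "('h \<times> 'h \<Rightarrow>\<^sub>0 int) \<Rightarrow> ('h \<times> 'h \<Rightarrow>\<^sub>0 int)" where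
  "gamma Z = (SOME X. relA.cong (galois_beta \<Delta> X) Z)"

lemma galois_beta_gamma: "relA.cong (galois_beta \<Delta> (gamma Z)) Z"
  unfolding gamma_def using galois_beta_surj by (rule someI_ex)

text \<open>The product of \<open>H \<otimes>\<^bsub>A\<^sup>o\<^esub> H\<^sup>o\<^sup>p\<close>: the translation map \<open>\<gamma>\<close> is anti-multiplicative,
  \<open>\<gamma>(x y) = x\<^sub>+ y\<^sub>+ \<otimes> y\<^sub>- x\<^sub>-\<close>.\<close>
definition twisted_mult :: "('h \<times> 'h \<Rightarrow>\<^sub>0 int) \<Rightarrow> ('h \<times> 'h \<Rightarrow>\<^sub>0 int) \<Rightarrow> ('h \<times> 'h \<Rightarrow>\<^sub>0 int)" where
  "twisted_mult X Y = frag_extend (\<lambda>(u, v). frag_extend (\<lambda>(u', v'). frag_of (u * u', v' * v)) Y) X"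

lemma galois_beta_twisted_mult_frag_of:
  assumes Y: "relA.cong (galois_beta \<Delta> Y) (frag_of (b, 1))"
  shows "relA.cong (galois_beta \<Delta> (twisted_mult (frag_of (u, v)) Y))
    (tmap (\<lambda>w. w * b) (\<lambda>w. w * v) (\<Delta> u))"
proof -
  define G where "G Z = tmap id (\<lambda>w. w * v) (tmult (\<Delta> u) Z)" for Z
  have G_add: "G (Z + Z') = G Z + G Z'" for Z Z'
    by (simp add: G_def tmult_add_right tmap_add)
  have "galois_beta \<Delta> (twisted_mult (frag_of (u, v)) Y)
      = frag_extend (\<lambda>(u', v'). tmap id (\<lambda>w. w * (v' * v)) (\<Delta> (u * u'))) Y"
    by (simp add: twisted_mult_def galois_beta_frag_extend case_prod_unfold)
  also have "relA.cong \<dots> (frag_extend (\<lambda>(u', v'). tmap id (\<lambda>w. w * (v' * v)) (tmult (\<Delta> u) (\<Delta> u'))) Y)"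
  proof (rule relA.frag_extend_cong[OF subset_UNIV])
    fix p :: "'h \<times> 'h"
    obtain u' v' where p: "p = (u', v')"
      by force
    have "tmap (\<lambda>x. x * 1) (\<lambda>w. w * (v' * v)) (\<Delta> (u * u') - tmult (\<Delta> u) (\<Delta> u')) \<in> relA"
      using Delta_mult unfolding relA.cong_def by (rule tmap_mult_right_mem)
    then show "relA.cong ((\<lambda>(u', v'). tmap id (\<lambda>w. w * (v' * v)) (\<Delta> (u * u'))) p)
        ((\<lambda>(u', v'). tmap id (\<lambda>w. w * (v' * v)) (tmult (\<Delta> u) (\<Delta> u'))) p)"
      by (simp add: p relA.cong_def tmap_diff)
  qed
  also have "\<dots> = frag_extend (\<lambda>p. G (galois_beta \<Delta> (frag_of p))) Y"
    by (rule frag_extend_eq) (auto simp: G_def tmult_tmap_right tmap_tmap mult.assoc)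
  also have "\<dots> = G (galois_beta \<Delta> Y)"
    using frag_extend_additive[OF G_add, of "\<lambda>p. galois_beta \<Delta> (frag_of p)" Y]
    by (simp add: galois_beta_frag_extend[symmetric] frag_expansion[symmetric])
  also have "relA.cong \<dots> (G (frag_of (b, 1)))"
    unfolding G_def relA.cong_def tmap_diff[symmetric] tmult_diff_right[symmetric]
    using tmap_mult_right_mem[OF tmult_mem[OF Delta_takeuchi Y[unfolded relA.cong_def]], of 1 v]
    by simp
  also have "G (frag_of (b, 1)) = tmap (\<lambda>w. w * b) (\<lambda>w. w * v) (\<Delta> u)"
    by (simp add: G_def tmult_frag_of_right tmap_tmap)
  finally show ?thesis .
qed

lemma galois_beta_twisted_mult:
  assumes "relA.cong (galois_beta \<Delta> Y) (frag_of (b, 1))"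
  shows "relA.cong (galois_beta \<Delta> (twisted_mult X Y)) (tmap (\<lambda>w. w * b) id (galois_beta \<Delta> X))"
proof -
  have "galois_beta \<Delta> (twisted_mult X Y)
      = frag_extend (\<lambda>p. galois_beta \<Delta> (twisted_mult (frag_of p) Y)) X"
    by (simp add: twisted_mult_def galois_beta_frag_extend)
  also have "relA.cong \<dots> (frag_extend (\<lambda>p. tmap (\<lambda>w. w * b) id (galois_beta \<Delta> (frag_of p))) X)"
    using galois_beta_twisted_mult_frag_of[OF assms]
    by (intro relA.frag_extend_cong[OF subset_UNIV]) (auto simp: tmap_tmap)
  also have "\<dots> = tmap (\<lambda>w. w * b) id (galois_beta \<Delta> X)"
    by (simp add: galois_beta_frag_extend[symmetric] tmap_frag_extend[symmetric]
        frag_expansion[symmetric])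
  finally show ?thesis .
qed

end

section \<open>The coinvariants lie in \<open>B\<close>\<close>

locale hopf_subalgebra = hopf_algebroid \<iota> \<kappa> s t \<Delta> \<epsilon> + subalgebra_quotient B
  for \<iota> :: "'k::field \<Rightarrow> 'a::ring_1" and \<kappa> :: "'k \<Rightarrow> 'h::ring_1"
    and s :: "'a \<Rightarrow> 'h" and t :: "'a \<Rightarrow> 'h"
    and \<Delta> :: "'h \<Rightarrow> ('h \<times> 'h \<Rightarrow>\<^sub>0 int)" and \<epsilon> :: "'h \<Rightarrow> 'a"
    and B :: "'h set" +
  assumes target_mem: "t a \<in> B"
    and gamma_closed: "gamma_in s t \<Delta> B"
begin

definition rho :: "('h \<times> 'h \<Rightarrow>\<^sub>0 int) \<Rightarrow> ('h \<times> 'h list \<Rightarrow>\<^sub>0 int)" where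
  "rho = tmap id cls"

lemma rho_frag_of [simp]: "rho (frag_of (u, v)) = frag_of (u, cls v)"
  by (simp add: rho_def)

lemma rho_add: "rho (X + Y) = rho X + rho Y"
  by (simp add: rho_def tmap_add)

lemma rho_diff: "rho (X - Y) = rho X - rho Y"
  by (simp add: rho_def tmap_diff)

lemma rho_frag_extend: "rho (frag_extend F X) = frag_extend (\<lambda>p. rho (F p)) X"
  by (simp add: rho_def tmap_frag_extend)

lemma cls_zero_mem: "frag_of (u, cls 0) \<in> relB"
proof -
  have "frag_of (u, cls_add (cls 0) (cls 0)) - frag_of (u, cls 0) - frag_of (u, cls 0) \<in> relB"
    by (rule tens_rel.tr_addr) auto
  then show ?thesis
    by simp
qed

lemma cls_add_cong: "relB.cong (frag_of (u, cls (a + b))) (frag_of (u, cls a) + frag_of (u, cls b))"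
proof -
  have "frag_of (u, cls_add (cls a) (cls b)) - frag_of (u, cls a) - frag_of (u, cls b) \<in> relB"
    by (rule tens_rel.tr_addr) auto
  then show ?thesis
    by (simp add: relB.cong_def diff_diff_eq)
qed

lemma rho_tensAo: "X \<in> tensAo t \<Longrightarrow> rho X \<in> relB"
  unfolding tensAo_def
proof (erule tens_rel_image_mem[OF _ relB.additive_subgroup_axioms rho_add])
  fix m n n' :: 'h
  show "rho (frag_of (m, n + n') - frag_of (m, n) - frag_of (m, n')) \<in> relB"
    using cls_add_cong by (simp add: rho_diff rho_add relB.cong_def diff_diff_eq)
next
  fix m n :: 'h and r :: 'a
  have "frag_of (m * t r, cls n) - frag_of (m, cls_act (t r) (cls n)) \<in> relB"
    by (rule tens_rel.tr_bal) (auto simp: target_mem)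
  then show "rho (frag_of (m * t r, n) - frag_of (m, t r * n)) \<in> relB"
    by (simp add: rho_diff target_mem)
qed (simp add: rho_diff tens_rel.tr_addl)

definition rho_gamma :: "('h \<times> 'h \<Rightarrow>\<^sub>0 int) \<Rightarrow> ('h \<times> 'h list \<Rightarrow>\<^sub>0 int)" where
  "rho_gamma = frag_extend (\<lambda>p. rho (gamma (frag_of p)))"

lemma rho_cong_rho_gamma:
  assumes "relA.cong (galois_beta \<Delta> X) Z"
  shows "relB.cong (rho X) (rho_gamma Z)"
proof -
  define Y where "Y = frag_extend (\<lambda>p. gamma (frag_of p)) Z"
  have "relA.cong (galois_beta \<Delta> Y) (frag_extend frag_of Z)"
    unfolding Y_def galois_beta_frag_extend
    using galois_beta_gamma by (rule relA.frag_extend_cong[OF subset_UNIV])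
  then have "relA.cong (galois_beta \<Delta> X) (galois_beta \<Delta> Y)"
    using assms by (metis frag_expansion relA.cong_sym relA.cong_trans)
  then have "rho (X - Y) \<in> relB"
    by (intro rho_tensAo galois_beta_inj)
  moreover have "rho Y = rho_gamma Z"
    by (simp add: Y_def rho_frag_extend rho_gamma_def)
  ultimately show ?thesis
    by (simp add: relB.cong_def rho_diff)
qed

lemma rho_gamma_relA: "Z \<in> relA \<Longrightarrow> rho_gamma Z \<in> relB"
  using rho_cong_rho_gamma[of 0 Z] by (simp add: relA.cong_def relB.cong_def rho_def)

lemma rho_twisted_mult_mem:
  assumes Y_keys: "Poly_Mapping.keys Y \<subseteq> B \<times> UNIV" and Y_ev: "ev (\<lambda>(u, v). u * v) Y = 0"
  shows "rho (tmap id (\<lambda>v. v * y) (twisted_mult X Y)) \<in> relB"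
proof -
  have "frag_extend (\<lambda>(u', v'). frag_of (u * u', cls (v' * v * y))) Y \<in> relB" for u v
  proof -
    have "relB.cong (frag_extend (\<lambda>(u', v'). frag_of (u * u', cls (v' * v * y))) Y)
        (frag_extend (\<lambda>(u', v'). frag_of (u, cls (u' * (v' * v * y)))) Y)"
    proof (rule relB.frag_extend_cong[OF Y_keys])
      fix p :: "'h \<times> 'h"
      assume "p \<in> B \<times> UNIV"
      then obtain u' v' where p: "p = (u', v')" "u' \<in> B"
        by auto
      have "frag_of (u * u', cls (v' * v * y)) - frag_of (u, cls_act u' (cls (v' * v * y))) \<in> relB"
        by (rule tens_rel.tr_bal) (auto simp: p)
      then show "relB.cong ((\<lambda>(u', v'). frag_of (u * u', cls (v' * v * y))) p)
          ((\<lambda>(u', v'). frag_of (u, cls (u' * (v' * v * y)))) p)"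
        by (simp add: p relB.cong_def)
    qed
    also have "relB.cong \<dots> (frag_of (u, cls (ev (\<lambda>(u', v'). u' * (v' * v * y)) Y)))"
      using relB.frag_extend_ev_cong[where L="\<lambda>z. frag_of (u, cls z)", OF cls_add_cong]
      by (simp add: case_prod_unfold)
    also have "ev (\<lambda>(u', v'). u' * (v' * v * y)) Y = 0"
      using ev_mult_right[of "\<lambda>(u', v'). u' * v'" "v * y" Y] Y_ev
      by (simp add: case_prod_unfold mult.assoc)
    finally show ?thesis
      using cls_zero_mem relB.cong_mem by blast
  qed
  moreover have "rho (tmap id (\<lambda>v. v * y) (twisted_mult X Y))
      = frag_extend (\<lambda>(u, v). frag_extend (\<lambda>(u', v'). frag_of (u * u', cls (v' * v * y))) Y) X"
    by (simp add: rho_def twisted_mult_def tmap_frag_extend case_prod_unfold)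
  ultimately show ?thesis
    by (auto intro: relB.frag_extend_mem[OF subset_UNIV])
qed

text \<open>With \<open>\<gamma>(b) = b\<^sub>+ \<otimes> b\<^sub>-\<close>, \<open>b\<^sub>+ \<in> B\<close>: \<open>\<rho>(\<gamma>(h b) y) = h\<^sub>+ \<otimes> [b\<^sub>+ b\<^sub>- h\<^sub>- y]\<close>
  vanishes because \<open>b\<^sub>+ b\<^sub>- = s(\<epsilon> b) = 0\<close>.\<close>
lemma rho_gamma_mult_Bplus:
  assumes "b \<in> B" and "\<epsilon> b = 0"
  shows "rho_gamma (frag_of (h * b, y)) \<in> relB"
proof -
  obtain Y where Y_keys: "Poly_Mapping.keys Y \<subseteq> B \<times> UNIV"
    and Y: "relA.cong (galois_beta \<Delta> Y) (frag_of (b, 1))"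
    using gamma_closed assms(1) unfolding gamma_in_def tensA_UNIV relA.cong_def by blast
  have "ev (\<lambda>(u, v). u * v) Y = 0"
    using counit_ev_cong[OF Y] counit_ev_galois_beta[of Y] assms(2)
    by (simp add: counit_ev_def s_zero)
  then have W_mem: "rho (tmap id (\<lambda>v. v * y) (twisted_mult (gamma (frag_of (h, 1))) Y)) \<in> relB"
    using Y_keys by (intro rho_twisted_mult_mem)
  have "galois_beta \<Delta> (tmap id (\<lambda>v. v * y) (twisted_mult (gamma (frag_of (h, 1))) Y))
      = tmap (\<lambda>u. u * 1) (\<lambda>v. v * y) (galois_beta \<Delta> (twisted_mult (gamma (frag_of (h, 1))) Y))"
    by (simp add: galois_beta_tmap_right)
  also have "relA.cong \<dots> (tmap (\<lambda>u. u * b) (\<lambda>v. v * y) (galois_beta \<Delta> (gamma (frag_of (h, 1)))))"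
    using tmap_mult_right_cong[OF galois_beta_twisted_mult[OF Y], of 1 y] by (simp add: tmap_tmap)
  also have "relA.cong \<dots> (frag_of (h * b, y))"
    using tmap_mult_right_cong[OF galois_beta_gamma[of "frag_of (h, 1)"], of b y] by simp
  finally show ?thesis
    using W_mem rho_cong_rho_gamma relB.cong_mem relB.cong_sym by blast
qed

sublocale HBplus: ring_subgroup "HBplus B"
  by (rule ring_subgroup_left_ideal_gen)

lemma rho_gamma_add_left:
  "relB.cong (rho_gamma (frag_of (x + x', y))) (rho_gamma (frag_of (x, y)) + rho_gamma (frag_of (x', y)))"
proof -
  have "frag_of (x + x', y) - frag_of (x, y) - frag_of (x', y) \<in> relA"
    by (rule tens_rel.tr_addl) auto
  from rho_gamma_relA[OF this] show ?thesis
    by (simp add: relB.cong_def rho_gamma_def frag_extend_diff frag_extend_add diff_diff_eq)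
qed

lemma rho_gamma_HBplus: "i \<in> (HBplus B) \<Longrightarrow> rho_gamma (frag_of (i, y)) \<in> relB"
proof (induction rule: left_ideal_gen.induct)
  case lig_zero
  then show ?case
    using rho_gamma_add_left[of 0 0 y] by (simp add: relB.cong_def)
next
  case (lig_gen b h)
  then show ?case
    by (simp add: Bplus_def rho_gamma_mult_Bplus)
next
  case (lig_add x x')
  then show ?case
    using rho_gamma_add_left[of x x' y] by (blast intro: relB.cong_mem relB.add_mem)
qed

lemma rho_gamma_cong_left:
  assumes "HBplus.cong x x'"
  shows "relB.cong (rho_gamma (frag_of (x, y))) (rho_gamma (frag_of (x', y)))"
proof -
  have "relB.cong (rho_gamma (frag_of (x, y)))
      (rho_gamma (frag_of (x', y)) + rho_gamma (frag_of (x - x', y)))"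
    using rho_gamma_add_left[of x' "x - x'" y] by simp
  also have "relB.cong \<dots> (rho_gamma (frag_of (x', y)) + 0)"
    using rho_gamma_HBplus assms by (intro relB.cong_add) (simp_all add: HBplus.cong_def)
  finally show ?thesis
    by simp
qed

text \<open>The factorisation of \<open>\<rho> \<circ> \<gamma>\<close> through \<open>H/H B\<^sup>+ \<otimes>\<^sub>A H\<close>, evaluated on coset
  representatives.\<close>
definition rho_gamma_quot :: "('h set \<times> 'h \<Rightarrow>\<^sub>0 int) \<Rightarrow> ('h \<times> 'h list \<Rightarrow>\<^sub>0 int)" where
  "rho_gamma_quot = frag_extend (\<lambda>(C, y). rho_gamma (frag_of (SOME h. h \<in> C, y)))"

lemma rho_gamma_quot_tmap_coset:
  "relB.cong (rho_gamma_quot (tmap (coset (HBplus B)) id X)) (rho_gamma X)"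
proof -
  have "rho_gamma_quot (tmap (coset (HBplus B)) id X)
      = frag_extend (\<lambda>(u, y). rho_gamma (frag_of (SOME h. h \<in> coset (HBplus B) u, y))) X"
    by (simp add: rho_gamma_quot_def tmap_eq_frag_extend frag_extend_frag_extend case_prod_unfold)
  also have "relB.cong \<dots> (frag_extend (\<lambda>p. rho_gamma (frag_of p)) X)"
    using rho_gamma_cong_left[OF HBplus.some_coset_cong]
    by (intro relB.frag_extend_cong[OF subset_UNIV]) auto
  also have "\<dots> = rho_gamma X"
    by (simp add: rho_gamma_def)
  finally show ?thesis .
qed

lemma rho_gamma_quot_relQ: "X \<in> relQ (HBplus B) \<Longrightarrow> rho_gamma_quot X \<in> relB"
proof (erule tens_rel_image_mem[OF _ relB.additive_subgroup_axioms])
  have on_image: "rho_gamma_quot (tmap (coset (HBplus B)) id Z) \<in> relB" if "Z \<in> relA" for Z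
    using rho_gamma_quot_tmap_coset rho_gamma_relA[OF that] relB.cong_mem by blast
  show "rho_gamma_quot (X + Y) = rho_gamma_quot X + rho_gamma_quot Y" for X Y
    by (simp add: rho_gamma_quot_def frag_extend_add)
  fix n n' :: 'h and r :: 'a and m m' :: "'h set"
  assume "m \<in> range (coset (HBplus B))" "m' \<in> range (coset (HBplus B))"
  then obtain a a' where m: "m = coset (HBplus B) a" "m' = coset (HBplus B) a'"
    by auto
  have "frag_of (a + a', n) - frag_of (a, n) - frag_of (a', n) \<in> relA"
    by (rule tens_rel.tr_addl) auto
  from on_image[OF this]
  show "rho_gamma_quot (frag_of (coset_add (HBplus B) m m', n) - frag_of (m, n) - frag_of (m', n)) \<in> relB"
    by (simp add: m tmap_diff)
  have "frag_of (a, n + n') - frag_of (a, n) - frag_of (a, n') \<in> relA"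
    by (rule tens_rel.tr_addr) auto
  from on_image[OF this]
  show "rho_gamma_quot (frag_of (m, n + n') - frag_of (m, n) - frag_of (m, n')) \<in> relB"
    by (simp add: m tmap_diff)
  have "frag_of ((\<lambda>x a. t a * x) a r, n) - frag_of (a, (\<lambda>a y. s a * y) r n) \<in> relA"
    by (rule tens_rel.tr_bal) auto
  from on_image[OF this]
  show "rho_gamma_quot (frag_of (coset_act t (HBplus B) m r, n) - frag_of (m, s r * n)) \<in> relB"
    by (simp add: m tmap_diff HBplus.coset_act_coset left_ideal_gen_mult_left)
qed

lemma coinv_subset:
  assumes "pure_incl B"
  shows "coinv s t \<Delta> (HBplus B) \<subseteq> B"
proof
  fix x
  assume "x \<in> coinv s t \<Delta> (HBplus B)"
  then have "rho_gamma_quot (tmap (coset (HBplus B)) id (\<Delta> x) - tmap (coset (HBplus B)) id (frag_of (1, x)))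
      \<in> relB"
    by (simp add: coinv_def rho_gamma_quot_relQ)
  then have quot: "relB.cong (rho_gamma_quot (tmap (coset (HBplus B)) id (frag_of (1, x))))
      (rho_gamma_quot (tmap (coset (HBplus B)) id (\<Delta> x)))"
    using relB.cong_sym by (simp add: relB.cong_def rho_gamma_quot_def frag_extend_diff)
  have "relA.cong (galois_beta \<Delta> (frag_of (1, x))) (frag_of (1, x))"
    using tmap_mult_right_cong[OF Delta_one, of 1 x] by simp
  then have "relB.cong (frag_of (1, cls x)) (rho_gamma (frag_of (1, x)))"
    using rho_cong_rho_gamma by fastforce
  also have "relB.cong \<dots> (rho_gamma (\<Delta> x))"
    using rho_gamma_quot_tmap_coset quot by (meson relB.cong_sym relB.cong_trans)
  also have "relB.cong \<dots> (frag_of (x, cls 1))"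
    using rho_cong_rho_gamma[of "frag_of (x, 1)" "\<Delta> x"] by (simp add: relB.cong_sym)
  also have "frag_of (x, cls 1) = frag_of (x, cls 0)"
    by (simp add: frag_of_eq cls_eq_iff cong_def one_mem)
  finally show "x \<in> B"
    using assms cls_zero_mem pure_incl_cls_mem relB.cong_mem by blast
qed

end

theorem theorem2p13:
  fixes \<iota> :: "'k::field \<Rightarrow> 'a::ring_1" and \<kappa> :: "'k \<Rightarrow> 'h::ring_1"
    and s :: "'a \<Rightarrow> 'h" and t :: "'a \<Rightarrow> 'h"
    and \<Delta> :: "'h \<Rightarrow> ('h \<times> 'h \<Rightarrow>\<^sub>0 int)" and \<epsilon> :: "'h \<Rightarrow> 'a"
    and B :: "'h set"
  assumes "left_hopf_algebroid \<iota> \<kappa> s t \<Delta> \<epsilon>"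
    and "s_flat s"
    and "comodule_subring s t \<Delta> \<epsilon> B"
    and "pure_incl B"
    and "gamma_in s t \<Delta> B"
  shows "B = coinv s t \<Delta> (left_ideal_gen (Bplus \<epsilon> B))"
proof -
  interpret hopf_subalgebra \<iota> \<kappa> s t \<Delta> \<epsilon> B
    using assms(1,3,5) by unfold_locales (auto simp: comodule_subring_def)
  show ?thesis
    using comodule_subring_subset_coinv[OF assms(3)] coinv_subset[OF assms(4)] by blast
qed

end
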